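(* (i) $\lim_{n\to\infty}\zeta^{\star}(2,\{1\}^n)=+\infty$. (ii) For integers $r\geq1$, $k_1\geq2$, $k_2,\ldots,k_r\geq1$, \[ \lim_{n\to\infty}\zeta^{\star}(k_1,\ldots,k_{r-1},k_r+1,\{1\}^n)=\zeta^{\star}(k_1,\ldots,k_{r-1},k_r),\qquad \lim_{n\to\infty}\zeta^{\star}(k_1,\ldots,k_{r-1},k_r,n)=\zeta^{\star}(k_1,\ldots,k_{r-1},k_r). \]
   Context: $\zeta^{\star}(k_1,\ldots,k_r)=\sum_{n_1\geq\cdots\geq n_r\geq 1}\frac{1}{n_1^{k_1}\cdots n_r^{k_r}}$ for $k_1\geq2$, $k_2,\ldots,k_r\geq1$; $\{1\}^n$ denotes $n$ consecutive arguments equal to $1$. *)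

theory Defs
  imports "HOL-Analysis.Analysis"
begin

definition zeta_star :: "nat list \<Rightarrow> real" where
  "zeta_star ks =
     (\<Sum>\<^sub>\<infinity> ns \<in> {ns. length ns = length ks \<and> sorted_wrt (\<ge>) ns \<and> (\<forall>n\<in>set ns. n \<ge> 1)}.
        \<Prod>i<length ks. 1 / real (ns ! i) ^ (ks ! i))"

end

theory Submission
  imports Defs
begin

(* Let zeta_star_upto k m be the sum defining zeta_star k restricted to n_1 <= m. It satisfies
   the recursion zeta_star_upto (k # ks) m = sum_{j<=m} j^-k zeta_star_upto ks j, increases
   in m, and converges to zeta_star k once it is bounded; for admissible k it is bounded by
   zeta_star_upto (2, {1}^(r-1)) m <= 2^r, by Abel summation. The key fact is that
   zeta_star_upto ({1}^n) m increases to m as n grows. Hence zeta_star_upto (2, {1}^n) m tends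
   to the harmonic number H_m, which gives (i), and
   zeta_star_upto (k_1, ..., k_r + 1, {1}^n) m tends to zeta_star_upto k m, while the
   corresponding zeta_star values stay below zeta_star k termwise, which gives the first limit
   of (ii). For the second, zeta_star k <= zeta_star (k, n) <= (1 + 4 / 2^n) zeta_star k,
   since sum_{j<=m} j^-n <= 1 + 4 / 2^n. *)

lemma sum_tendsto_infsum_of_exhaustion:
  fixes f :: "'a \<Rightarrow> real"
  assumes nonneg: "\<And>x. x \<in> A \<Longrightarrow> f x \<ge> 0"
    and B: "incseq B" "\<And>m. finite (B m)" "\<And>m. B m \<subseteq> A"
    and exhaust: "\<And>X. finite X \<Longrightarrow> X \<subseteq> A \<Longrightarrow> \<exists>m. X \<subseteq> B m"
    and bdd: "bdd_above (range (\<lambda>m. sum f (B m)))"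
  shows "(\<lambda>m. sum f (B m)) \<longlonglongrightarrow> infsum f A"
proof -
  have B_lim: "filterlim B (finite_subsets_at_top A) sequentially"
    unfolding filterlim_finite_subsets_at_top
  proof (intro allI impI)
    fix X assume "finite X \<and> X \<subseteq> A"
    then obtain m where m: "X \<subseteq> B m" using exhaust by blast
    have "X \<subseteq> B n" if "n \<ge> m" for n
      using m monoD[OF B(1) that] by (rule order_trans)
    then show "\<forall>\<^sub>F n in sequentially. finite (B n) \<and> X \<subseteq> B n \<and> B n \<subseteq> A"
      using B(2,3) unfolding eventually_sequentially by auto
  qed
  obtain C where C: "\<And>m. sum f (B m) \<le> C"
    using bdd unfolding bdd_above_def by blast
  have "sum f X \<le> C" if X: "finite X" "X \<subseteq> A" for X
  proof -
    obtain m where "X \<subseteq> B m" using exhaust[OF X] by blast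
    moreover have "\<And>x. x \<in> B m - X \<Longrightarrow> f x \<ge> 0"
      using B(3) nonneg by blast
    ultimately have "sum f X \<le> sum f (B m)"
      by (intro sum_mono2[OF B(2)])
    also have "\<dots> \<le> C" by (rule C)
    finally show ?thesis .
  qed
  then have "eventually (\<lambda>X. sum f X \<le> C) (finite_subsets_at_top A)"
    by (intro eventually_finite_subsets_at_top_weakI)
  with nonneg have "f summable_on A"
    by (rule nonneg_bounded_partial_sums_imp_summable_on)
  then show ?thesis
    using filterlim_compose[OF infsum_tendsto B_lim] by simp
qed

definition zeta_star_indices :: "nat \<Rightarrow> nat list set" where
  "zeta_star_indices r = {ns. length ns = r \<and> sorted_wrt (\<ge>) ns \<and> (\<forall>n\<in>set ns. n \<ge> 1)}"

definition zeta_star_indices_upto :: "nat \<Rightarrow> nat \<Rightarrow> nat list set" where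
  "zeta_star_indices_upto r m =
     {ns. length ns = r \<and> sorted_wrt (\<ge>) ns \<and> (\<forall>n\<in>set ns. 1 \<le> n \<and> n \<le> m)}"

definition zeta_star_term :: "nat list \<Rightarrow> nat list \<Rightarrow> real" where
  "zeta_star_term ks ns = (\<Prod>i<length ks. 1 / real (ns ! i) ^ (ks ! i))"

fun zeta_star_upto :: "nat list \<Rightarrow> nat \<Rightarrow> real" where
  "zeta_star_upto [] m = 1"
| "zeta_star_upto (k # ks) m = (\<Sum>j=1..m. 1 / real j ^ k * zeta_star_upto ks j)"

lemma zeta_star_eq_infsum:
  "zeta_star ks = infsum (zeta_star_term ks) (zeta_star_indices (length ks))"
  unfolding zeta_star_def zeta_star_term_def[abs_def] zeta_star_indices_def ..

lemma zeta_star_term_nonneg: "zeta_star_term ks ns \<ge> 0"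
  unfolding zeta_star_term_def by (intro prod_nonneg) auto

lemma zeta_star_term_Cons:
  "zeta_star_term (k # ks) (j # ns) = 1 / real j ^ k * zeta_star_term ks ns"
  unfolding zeta_star_term_def length_Cons prod.lessThan_Suc_shift by simp

lemma finite_zeta_star_indices_upto: "finite (zeta_star_indices_upto r m)"
proof (rule finite_subset)
  show "zeta_star_indices_upto r m \<subseteq> {ns. set ns \<subseteq> {0..m} \<and> length ns = r}"
    unfolding zeta_star_indices_upto_def by auto
qed (rule finite_lists_length_eq, simp)

lemma zeta_star_indices_upto_Suc:
  "zeta_star_indices_upto (Suc r) m =
     (\<lambda>(j, ns). j # ns) ` (SIGMA j:{1..m}. zeta_star_indices_upto r j)"
proof (intro equalityI subsetI)
  fix xs assume "xs \<in> zeta_star_indices_upto (Suc r) m"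
  then obtain j ns where "xs = j # ns" "(j, ns) \<in> (SIGMA j:{1..m}. zeta_star_indices_upto r j)"
    unfolding zeta_star_indices_upto_def by (cases xs) auto
  then show "xs \<in> (\<lambda>(j, ns). j # ns) ` (SIGMA j:{1..m}. zeta_star_indices_upto r j)"
    by (auto intro: rev_image_eqI)
qed (force simp: zeta_star_indices_upto_def)

lemma zeta_star_upto_eq_sum:
  "zeta_star_upto ks m = sum (zeta_star_term ks) (zeta_star_indices_upto (length ks) m)"
proof (induction ks arbitrary: m)
  case Nil
  have "zeta_star_indices_upto 0 m = {[]}"
    unfolding zeta_star_indices_upto_def by auto
  then show ?case by (simp add: zeta_star_term_def)
next
  case (Cons k ks)
  let ?I = "SIGMA j:{1..m}. zeta_star_indices_upto (length ks) j"
  have inj: "inj_on (\<lambda>(j, ns). j # ns) ?I"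
    by (auto simp: inj_on_def)
  have "sum (zeta_star_term (k # ks)) (zeta_star_indices_upto (length (k # ks)) m)
      = (\<Sum>(j, ns)\<in>?I. 1 / real j ^ k * zeta_star_term ks ns)"
    unfolding length_Cons zeta_star_indices_upto_Suc sum.reindex[OF inj]
    by (intro sum.cong) (auto simp: zeta_star_term_Cons)
  also have "\<dots> = (\<Sum>j=1..m. 1 / real j ^ k * zeta_star_upto ks j)"
    by (subst sum.Sigma[symmetric])
       (auto simp: finite_zeta_star_indices_upto Cons.IH sum_distrib_left)
  finally show ?case by simp
qed

lemma zeta_star_upto_nonneg: "zeta_star_upto ks m \<ge> 0"
  by (induction ks arbitrary: m) (auto intro!: sum_nonneg)

lemma incseq_zeta_star_upto: "incseq (zeta_star_upto ks)"
proof (cases ks)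
  case (Cons k ks')
  show ?thesis
    unfolding Cons
    by (intro incseq_SucI) (simp add: zeta_star_upto_nonneg)
qed (simp add: incseq_def)

lemma zeta_star_upto_tendsto:
  assumes "bdd_above (range (zeta_star_upto ks))"
  shows "zeta_star_upto ks \<longlonglongrightarrow> zeta_star ks"
proof -
  let ?A = "zeta_star_indices (length ks)" and ?B = "zeta_star_indices_upto (length ks)"
  have "?B m \<subseteq> ?A" for m
    unfolding zeta_star_indices_def zeta_star_indices_upto_def by auto
  moreover have "\<exists>m. X \<subseteq> ?B m" if "finite X" "X \<subseteq> ?A" for X
  proof
    let ?m = "Max (insert 0 (\<Union>(set ` X)))"
    show "X \<subseteq> ?B ?m"
      using that unfolding zeta_star_indices_def zeta_star_indices_upto_def
      by (auto intro: Max_ge)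
  qed
  moreover have "incseq ?B"
    by (intro monoI) (auto simp: zeta_star_indices_upto_def)
  ultimately have "(\<lambda>m. sum (zeta_star_term ks) (?B m)) \<longlonglongrightarrow> infsum (zeta_star_term ks) ?A"
    using assms zeta_star_term_nonneg finite_zeta_star_indices_upto
    by (intro sum_tendsto_infsum_of_exhaustion) (auto simp: zeta_star_upto_eq_sum)
  then show ?thesis
    by (simp add: zeta_star_eq_infsum zeta_star_upto_eq_sum[abs_def])
qed

lemma zeta_star_upto_le_zeta_star:
  assumes "bdd_above (range (zeta_star_upto ks))"
  shows "zeta_star_upto ks m \<le> zeta_star ks"
  using incseq_le[OF incseq_zeta_star_upto zeta_star_upto_tendsto[OF assms]] .

lemma zeta_star_upto_antimono:
  "list_all2 (\<ge>) ks ks' \<Longrightarrow> zeta_star_upto ks m \<le> zeta_star_upto ks' m"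
proof (induction ks arbitrary: ks' m)
  case (Cons k ks)
  then obtain k' ks'' where ks': "ks' = k' # ks''" "k' \<le> k" "list_all2 (\<ge>) ks ks''"
    by (auto simp: list_all2_Cons1)
  have "1 / real j ^ k * zeta_star_upto ks j \<le> 1 / real j ^ k' * zeta_star_upto ks'' j"
    if "j \<ge> 1" for j
    using that ks'(2) Cons.IH[OF ks'(3)]
    by (intro mult_mono divide_left_mono power_increasing) (auto simp: zeta_star_upto_nonneg)
  then show ?case
    unfolding ks' by (auto intro: sum_mono)
qed simp

lemma zeta_star_upto_append_le:
  assumes "c \<ge> 0" and "\<And>j. j \<ge> 1 \<Longrightarrow> zeta_star_upto ts j \<le> c * zeta_star_upto ts' j"
    and "m \<ge> 1"
  shows "zeta_star_upto (ks @ ts) m \<le> c * zeta_star_upto (ks @ ts') m"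
  using assms(3)
proof (induction ks arbitrary: m)
  case (Cons k ks)
  have "zeta_star_upto ((k # ks) @ ts) m
      \<le> (\<Sum>j=1..m. 1 / real j ^ k * (c * zeta_star_upto (ks @ ts') j))"
    unfolding append_Cons zeta_star_upto.simps
    by (intro sum_mono mult_left_mono Cons.IH) auto
  also have "\<dots> = c * zeta_star_upto ((k # ks) @ ts') m"
    by (simp add: sum_distrib_left mult_ac)
  finally show ?case .
qed (use assms(2) in simp)

lemma zeta_star_upto_append_tendsto:
  assumes "\<And>j. (\<lambda>n. zeta_star_upto (ts n) j) \<longlonglongrightarrow> zeta_star_upto ts' j"
  shows "(\<lambda>n. zeta_star_upto (ks @ ts n) m) \<longlonglongrightarrow> zeta_star_upto (ks @ ts') m"
proof (induction ks arbitrary: m)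
  case (Cons k ks)
  show ?case
    unfolding append_Cons zeta_star_upto.simps by (intro tendsto_sum tendsto_mult_left Cons.IH)
qed (simp add: assms)

lemma zeta_star_upto_ones_Suc:
  "zeta_star_upto (replicate (Suc r) 1) m = (\<Sum>j=1..m. zeta_star_upto (replicate r 1) j / real j)"
  by simp

lemma zeta_star_upto_ones_le: "m \<ge> 1 \<Longrightarrow> zeta_star_upto (replicate r 1) m \<le> real m"
proof (induction r arbitrary: m)
  case (Suc r)
  have "zeta_star_upto (replicate (Suc r) 1) m \<le> (\<Sum>j=1..m. 1)"
    unfolding zeta_star_upto_ones_Suc using Suc.IH by (intro sum_mono) auto
  then show ?case by simp
qed simp

lemma zeta_star_upto_ones_le_Suc:
  "m \<ge> 1 \<Longrightarrow> zeta_star_upto (replicate r 1) m \<le> zeta_star_upto (replicate (Suc r) 1) m"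
proof (induction r arbitrary: m)
  case 0
  have "1 / real 1 \<le> (\<Sum>j=1..m. 1 / real j)"
    using 0 by (intro member_le_sum) auto
  then show ?case by simp
next
  case (Suc r)
  show ?case
    unfolding zeta_star_upto_ones_Suc[of "Suc r"] zeta_star_upto_ones_Suc[of r]
    using Suc.IH by (intro sum_mono divide_right_mono) auto
qed

lemma zeta_star_upto_ones_tendsto:
  "m \<ge> 1 \<Longrightarrow> (\<lambda>r. zeta_star_upto (replicate r 1) m) \<longlonglongrightarrow> real m"
proof (induction m rule: nat_induct_at_least)
  case base
  have "zeta_star_upto (replicate r 1) 1 = 1" for r
    by (induction r) simp_all
  then show ?case by simp
next
  case (Suc m)
  define x where "x r = zeta_star_upto (replicate r 1) (Suc m)" for r
  have "incseq x"
    unfolding x_def by (intro incseq_SucI zeta_star_upto_ones_le_Suc) simp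
  moreover have "bdd_above (range x)"
    unfolding x_def using zeta_star_upto_ones_le[of "Suc m"]
    by (intro bdd_aboveI[of _ "real (Suc m)"]) auto
  ultimately have x_lim: "x \<longlonglongrightarrow> (SUP r. x r)"
    by (intro LIMSEQ_incseq_SUP)
  let ?L = "SUP r. x r"
  have "x (Suc r) = zeta_star_upto (replicate (Suc r) 1) m + x r / real (Suc m)" for r
    by (simp add: x_def)
  then have "(\<lambda>r. x (Suc r)) \<longlonglongrightarrow> real m + ?L / real (Suc m)"
    using LIMSEQ_Suc[OF Suc.IH] x_lim by (auto intro!: tendsto_intros)
  moreover have "(\<lambda>r. x (Suc r)) \<longlonglongrightarrow> ?L"
    using x_lim by (rule LIMSEQ_Suc)
  ultimately have "?L = real m + ?L / real (Suc m)"
    using LIMSEQ_unique by blast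
  then have "real m * ?L = real m * real (Suc m)"
    by (simp add: field_simps)
  then have "?L = real (Suc m)"
    using Suc.hyps by simp
  then show ?case
    using x_lim unfolding x_def by simp
qed

lemma sum_differences_div_by_parts:
  fixes f :: "nat \<Rightarrow> real"
  assumes "f 0 = 0"
  shows "(\<Sum>i=1..m. (f i - f (i - 1)) / real i)
       = (\<Sum>i=1..m. f i * (1 / real i - 1 / real (Suc i))) + f m / real (Suc m)"
  by (induction m) (simp_all add: assms algebra_simps diff_divide_distrib)

lemma zeta_star_upto_two_ones_Suc_le:
  "zeta_star_upto (2 # replicate (Suc r) 1) m \<le> 2 * zeta_star_upto (2 # replicate r 1) m"
proof -
  define S where "S i = zeta_star_upto (replicate (Suc r) 1) i" for i
  have S_nonneg: "S i \<ge> 0" for i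
    unfolding S_def by (rule zeta_star_upto_nonneg)
  have S_0: "S 0 = 0"
    by (simp add: S_def)
  have S_diff: "(S i - S (i - 1)) / real i = 1 / real i ^ 2 * zeta_star_upto (replicate r 1) i"
    if "i \<ge> 1" for i
    using that unfolding S_def by (cases i) (simp_all add: power2_eq_square)
  have "zeta_star_upto (2 # replicate (Suc r) 1) m = (\<Sum>i=1..m. S i * (1 / real i ^ 2))"
    by (simp add: S_def)
  also have "\<dots> \<le> (\<Sum>i=1..m. S i * (2 * (1 / real i - 1 / real (Suc i))))"
  proof (intro sum_mono mult_left_mono S_nonneg)
    fix i assume "i \<in> {1..m}"
    then show "1 / real i ^ 2 \<le> 2 * (1 / real i - 1 / real (Suc i))"
      by (simp add: divide_simps power2_eq_square)
  qed
  also have "\<dots> \<le> 2 * ((\<Sum>i=1..m. S i * (1 / real i - 1 / real (Suc i))) + S m / real (Suc m))"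
    using S_nonneg[of m] by (simp add: sum_distrib_left mult_ac)
  also have "\<dots> = 2 * (\<Sum>i=1..m. (S i - S (i - 1)) / real i)"
    by (simp only: sum_differences_div_by_parts[of S, OF S_0])
  also have "\<dots> = 2 * (\<Sum>i=1..m. 1 / real i ^ 2 * zeta_star_upto (replicate r 1) i)"
    using S_diff by (intro arg_cong[where f = "(*) 2"] sum.cong) auto
  also have "\<dots> = 2 * zeta_star_upto (2 # replicate r 1) m"
    by simp
  finally show ?thesis .
qed

lemma inverse_Suc_power_le_telescoping:
  assumes "n \<ge> 2" "j \<ge> 1"
  shows "1 / real (Suc j) ^ n \<le> 4 * (1/2) ^ n * (1 / real j - 1 / real (Suc j))"
proof -
  obtain k where n: "n = k + 2"
    using assms(1) le_Suc_ex by (metis add.commute)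
  have "2 ^ k * (real j * real (Suc j)) \<le> real (Suc j) ^ k * real (Suc j) ^ 2"
    using assms(2) by (intro mult_mono power_mono) (auto simp: power2_eq_square)
  moreover have "2 ^ n = 4 * (2::real) ^ k" "real (Suc j) ^ n = real (Suc j) ^ k * real (Suc j) ^ 2"
    by (simp_all add: n power_add power2_eq_square)
  ultimately have "2 ^ n * (real j * real (Suc j)) \<le> 4 * real (Suc j) ^ n"
    by simp
  moreover have "1 / real j - 1 / real (Suc j) = 1 / (real j * real (Suc j))"
    using assms(2) by (simp add: field_simps)
  ultimately show ?thesis
    using assms(2) by (simp add: power_one_over divide_simps)
qed

lemma sum_inverse_power_le:
  assumes "n \<ge> 2" "j \<ge> 1"
  shows "(\<Sum>i=1..j. 1 / real i ^ n) \<le> 1 + 4 * (1/2) ^ n * (1 - 1 / real j)"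
  using assms(2)
proof (induction j rule: nat_induct_at_least)
  case (Suc j)
  then show ?case
    using inverse_Suc_power_le_telescoping[OF assms(1) Suc.hyps] by (simp add: algebra_simps)
qed simp

lemma zeta_star_upto_two_ones_le: "zeta_star_upto (2 # replicate r 1) m \<le> 2 ^ Suc r"
proof (induction r)
  case 0
  show ?case
  proof (cases "m = 0")
    case False
    then have "zeta_star_upto [2] m \<le> 1 + 4 * (1/2) ^ 2 * (1 - 1 / real m)"
      using sum_inverse_power_le[of 2 m] by simp
    also have "\<dots> \<le> 2"
      by (simp add: power2_eq_square)
    finally show ?thesis by simp
  qed simp
next
  case (Suc r)
  then show ?case
    using zeta_star_upto_two_ones_Suc_le[of r m] by simp
qed

definition admissible :: "nat list \<Rightarrow> bool" where
  "admissible ks \<longleftrightarrow> ks \<noteq> [] \<and> hd ks \<ge> 2 \<and> (\<forall>k\<in>set ks. k \<ge> 1)"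

lemma zeta_star_upto_le_if_admissible:
  assumes "admissible ks"
  shows "zeta_star_upto ks m \<le> 2 ^ length ks"
proof -
  obtain k ks' where ks: "ks = k # ks'" "k \<ge> 2" "\<forall>k\<in>set ks'. k \<ge> 1"
    using assms unfolding admissible_def by (cases ks) auto
  have "list_all2 (\<ge>) ks' (replicate (length ks') 1)"
    using ks(3) by (auto simp: list_all2_conv_all_nth)
  with ks(1,2) have "list_all2 (\<ge>) ks (2 # replicate (length ks') 1)"
    by simp
  then have "zeta_star_upto ks m \<le> zeta_star_upto (2 # replicate (length ks') 1) m"
    by (rule zeta_star_upto_antimono)
  also have "\<dots> \<le> 2 ^ length ks"
    using zeta_star_upto_two_ones_le ks(1) by simp
  finally show ?thesis .
qed

lemma bdd_above_zeta_star_upto: "admissible ks \<Longrightarrow> bdd_above (range (zeta_star_upto ks))"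
  using zeta_star_upto_le_if_admissible by (intro bdd_aboveI) auto

lemma zeta_star_le_if_zeta_star_upto_le:
  assumes "admissible ks" "admissible ks'"
    and "\<And>m. m \<ge> 1 \<Longrightarrow> zeta_star_upto ks m \<le> c * zeta_star_upto ks' m"
  shows "zeta_star ks \<le> c * zeta_star ks'"
proof (rule LIMSEQ_le)
  show "zeta_star_upto ks \<longlonglongrightarrow> zeta_star ks"
    using assms(1) by (intro zeta_star_upto_tendsto bdd_above_zeta_star_upto)
  show "(\<lambda>m. c * zeta_star_upto ks' m) \<longlonglongrightarrow> c * zeta_star ks'"
    using assms(2) by (intro tendsto_mult_left zeta_star_upto_tendsto bdd_above_zeta_star_upto)
  show "\<exists>N. \<forall>m\<ge>N. zeta_star_upto ks m \<le> c * zeta_star_upto ks' m"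
    using assms(3) by auto
qed

lemma eventually_gt_if_dominates_limits:
  fixes f :: "nat \<Rightarrow> nat \<Rightarrow> real"
  assumes "\<And>n m. f n m \<le> Y n" and "\<And>m. (\<lambda>n. f n m) \<longlonglongrightarrow> g m" and "a < g m"
  shows "eventually (\<lambda>n. a < Y n) sequentially"
  using order_tendstoD(1)[OF assms(2,3)]
  by eventually_elim (use assms(1) in \<open>blast intro: less_le_trans\<close>)

lemma tendsto_if_dominates_limits:
  fixes f :: "nat \<Rightarrow> nat \<Rightarrow> real"
  assumes "\<And>n m. f n m \<le> Y n" and "\<And>n. Y n \<le> L"
    and "\<And>m. (\<lambda>n. f n m) \<longlonglongrightarrow> g m" and "g \<longlonglongrightarrow> L"
  shows "Y \<longlonglongrightarrow> L"
proof (rule order_tendstoI)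
  fix b assume "b < L"
  with assms(4) have "eventually (\<lambda>m. b < g m) sequentially"
    by (rule order_tendstoD(1))
  from eventually_happens'[OF sequentially_bot this] obtain m where "b < g m" ..
  then show "eventually (\<lambda>n. b < Y n) sequentially"
    by (rule eventually_gt_if_dominates_limits[OF assms(1,3)])
next
  fix b assume "L < b"
  then show "eventually (\<lambda>n. Y n < b) sequentially"
    using le_less_trans[OF assms(2)] by (intro always_eventually) blast
qed

lemma zeta_star_two_ones_tendsto_at_top:
  "filterlim (\<lambda>n. zeta_star (2 # replicate n 1)) at_top sequentially"
  unfolding filterlim_at_top_dense
proof
  fix a :: real
  have approx: "(\<lambda>n. zeta_star_upto (2 # replicate n 1) m) \<longlonglongrightarrow> harm m" for m
  proof -
    have "(\<lambda>n. zeta_star_upto (2 # replicate n 1) m) \<longlonglongrightarrow> (\<Sum>i=1..m. 1 / real i ^ 2 * real i)"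
      unfolding zeta_star_upto.simps
      by (intro tendsto_sum tendsto_mult_left zeta_star_upto_ones_tendsto) simp
    also have "(\<Sum>i=1..m. 1 / real i ^ 2 * real i) = harm m"
      unfolding harm_def by (intro sum.cong) (auto simp: power2_eq_square field_simps)
    finally show ?thesis .
  qed
  have le: "zeta_star_upto (2 # replicate n 1) m \<le> zeta_star (2 # replicate n 1)" for n m
    by (intro zeta_star_upto_le_zeta_star bdd_above_zeta_star_upto) (simp add: admissible_def)
  have "eventually (\<lambda>m. a < harm m) sequentially"
    using harm_at_top unfolding filterlim_at_top_dense by blast
  from eventually_happens'[OF sequentially_bot this] obtain m where "a < harm m" ..
  then show "eventually (\<lambda>n. a < zeta_star (2 # replicate n 1)) sequentially"
    by (rule eventually_gt_if_dominates_limits[OF le approx])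
qed

lemma zeta_star_upto_Suc_ones_le:
  "zeta_star_upto (Suc a # replicate n 1) j \<le> zeta_star_upto [a] j"
proof -
  have "1 / real i ^ Suc a * zeta_star_upto (replicate n 1) i \<le> 1 / real i ^ a" if "i \<ge> 1" for i
  proof -
    have "1 / real i ^ Suc a * zeta_star_upto (replicate n 1) i \<le> 1 / real i ^ Suc a * real i"
      using that by (intro mult_left_mono zeta_star_upto_ones_le) auto
    also have "\<dots> = 1 / real i ^ a"
      using that by simp
    finally show ?thesis .
  qed
  then show ?thesis
    by (auto intro: sum_mono)
qed

lemma zeta_star_upto_Suc_ones_tendsto:
  "(\<lambda>n. zeta_star_upto (Suc a # replicate n 1) j) \<longlonglongrightarrow> zeta_star_upto [a] j"
proof -
  have "(\<lambda>n. zeta_star_upto (Suc a # replicate n 1) j) \<longlonglongrightarrow> (\<Sum>i=1..j. 1 / real i ^ Suc a * real i)"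
    unfolding zeta_star_upto.simps
    by (intro tendsto_sum tendsto_mult_left zeta_star_upto_ones_tendsto) simp
  then show ?thesis
    by simp
qed

lemma zeta_star_Suc_last_append_ones_tendsto:
  assumes "admissible ks"
  shows "(\<lambda>n. zeta_star (butlast ks @ [last ks + 1] @ replicate n 1)) \<longlonglongrightarrow> zeta_star ks"
proof -
  define ks0 a where "ks0 = butlast ks" and "a = last ks"
  have ks: "ks = ks0 @ [a]" and "a \<ge> 1"
    using assms by (simp_all add: admissible_def ks0_def a_def)
  then have adm: "admissible (ks0 @ Suc a # replicate n 1)" for n
    using assms unfolding admissible_def by (cases ks0) auto
  have "zeta_star (ks0 @ Suc a # replicate n 1) \<le> 1 * zeta_star (ks0 @ [a])" for n
    using adm assms[unfolded ks] zeta_star_upto_Suc_ones_le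
    by (intro zeta_star_le_if_zeta_star_upto_le zeta_star_upto_append_le) auto
  then have upper: "zeta_star (ks0 @ Suc a # replicate n 1) \<le> zeta_star ks" for n
    by (simp add: ks)
  have approx: "(\<lambda>n. zeta_star_upto (ks0 @ Suc a # replicate n 1) m) \<longlonglongrightarrow> zeta_star_upto ks m" for m
    unfolding ks by (rule zeta_star_upto_append_tendsto[OF zeta_star_upto_Suc_ones_tendsto])
  have lower: "zeta_star_upto (ks0 @ Suc a # replicate n 1) m \<le> zeta_star (ks0 @ Suc a # replicate n 1)"
    for n m
    by (intro zeta_star_upto_le_zeta_star bdd_above_zeta_star_upto adm)
  have "butlast ks @ [last ks + 1] @ replicate n 1 = ks0 @ Suc a # replicate n 1" for n
    by (simp add: ks0_def a_def)
  then show ?thesis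
    using tendsto_if_dominates_limits[OF lower upper approx]
      zeta_star_upto_tendsto[OF bdd_above_zeta_star_upto[OF assms]]
    by simp
qed

lemma zeta_star_append_tendsto:
  assumes "admissible ks"
  shows "(\<lambda>n. zeta_star (ks @ [n])) \<longlonglongrightarrow> zeta_star ks"
proof -
  define c where "c n = 1 + 4 * (1/2::real) ^ n" for n :: nat
  have adm: "admissible (ks @ [n])" if "n \<ge> 1" for n
    using assms that by (cases ks) (auto simp: admissible_def)
  have lower: "zeta_star ks \<le> zeta_star (ks @ [n])" if "n \<ge> 1" for n
  proof -
    have "zeta_star_upto [] j \<le> 1 * zeta_star_upto [n] j" if "j \<ge> 1" for j
      using that member_le_sum[of 1 "{1..j}" "\<lambda>i. 1 / real i ^ n"] by simp
    then have "zeta_star (ks @ []) \<le> 1 * zeta_star (ks @ [n])"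
      using assms adm[OF that]
      by (intro zeta_star_le_if_zeta_star_upto_le zeta_star_upto_append_le) auto
    then show ?thesis by simp
  qed
  have upper: "zeta_star (ks @ [n]) \<le> c n * zeta_star ks" if "n \<ge> 2" for n
  proof -
    have "zeta_star_upto [n] j \<le> c n * zeta_star_upto [] j" if "j \<ge> 1" for j
    proof -
      have "zeta_star_upto [n] j \<le> 1 + 4 * (1/2) ^ n * (1 - 1 / real j)"
        using sum_inverse_power_le[OF \<open>n \<ge> 2\<close> that] by simp
      also have "\<dots> \<le> c n"
        unfolding c_def by (simp add: mult_left_le)
      finally show ?thesis by simp
    qed
    then have "zeta_star (ks @ [n]) \<le> c n * zeta_star (ks @ [])"
      using assms adm that
      by (intro zeta_star_le_if_zeta_star_upto_le zeta_star_upto_append_le) (auto simp: c_def)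
    then show ?thesis by simp
  qed
  have "(\<lambda>n. c n * zeta_star ks) \<longlonglongrightarrow> (1 + 4 * 0) * zeta_star ks"
    unfolding c_def by (intro tendsto_intros LIMSEQ_power_zero) simp
  then have c_lim: "(\<lambda>n. c n * zeta_star ks) \<longlonglongrightarrow> zeta_star ks"
    by simp
  have "eventually (\<lambda>n. zeta_star ks \<le> zeta_star (ks @ [n])) sequentially"
    by (rule eventually_sequentiallyI[of 1]) (rule lower)
  moreover have "eventually (\<lambda>n. zeta_star (ks @ [n]) \<le> c n * zeta_star ks) sequentially"
    by (rule eventually_sequentiallyI[of 2]) (rule upper)
  ultimately show ?thesis
    using tendsto_const c_lim by (rule tendsto_sandwich)
qed

theorem lemma3p4:
  shows "filterlim (\<lambda>n. zeta_star (2 # replicate n 1)) at_top sequentially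
    \<and> (\<forall>ks::nat list. ks \<noteq> [] \<and> hd ks \<ge> 2 \<and> (\<forall>k\<in>set ks. k \<ge> 1) \<longrightarrow>
         (\<lambda>n. zeta_star (butlast ks @ [last ks + 1] @ replicate n 1)) \<longlonglongrightarrow> zeta_star ks
       \<and> (\<lambda>n. zeta_star (ks @ [n])) \<longlonglongrightarrow> zeta_star ks)"
  using zeta_star_two_ones_tendsto_at_top zeta_star_Suc_last_append_ones_tendsto
    zeta_star_append_tendsto
  unfolding admissible_def by blast

end
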